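(* Let $\theta>0$. Then there are $\psi,\psi_1,\psi_2\in\mathrm{H}^\infty_0(S_\theta)$ with \[\sum_{n\in\mathbb{Z}}\psi_1(z-n)\,\psi_2(z-n)\,\psi(z-n)=1\qquad(z\in S_\theta).\]
   Context: $S_\theta=\{z\in\mathbb{C}:|\operatorname{Im}z|<\theta\}$. $\mathrm{H}^\infty_0(S_\theta)$ is the set of holomorphic functions $f$ on $S_\theta$ such that for every $\alpha>0$ there is $C$ with $|f(z)|\le C(1+|\operatorname{Re}z|)^{-\alpha}$ for all $z\in S_\theta$. *)

theory Defs
  imports "HOL-Analysis.Analysis"
begin

definition strip :: "real \<Rightarrow> complex set" where
  "strip \<theta> = {z. \<bar>Im z\<bar> < \<theta>}"

definition Hinf0 :: "real \<Rightarrow> (complex \<Rightarrow> complex) set" where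
  "Hinf0 \<theta> = {f. f holomorphic_on strip \<theta> \<and>
     (\<forall>\<alpha>>0. \<exists>C. \<forall>z\<in>strip \<theta>. norm (f z) \<le> C * (1 + \<bar>Re z\<bar>) powr (- \<alpha>))}"

end

theory Submission
  imports Defs "HOL-Real_Asymp.Real_Asymp"
begin

(* The logistic function sigmoid w = 1 / (1 + exp (-w)) tends to 1 and 0 as Re w tends to
   +infinity and -infinity, so the window b(z) = sigmoid (a z) - sigmoid (a (z - 1)) telescopes:
   the sum over n of b(z - n) is 1. Choosing a = pi / (2 theta) keeps exp (-a z) in the closed
   right half-plane on the strip, where |1 + u| >= max 1 |u|; this yields b(z) = O(exp (-a |Re z|))
   and |cosh (a z / 4)| comparable to exp (a |Re z| / 4). So b factors as
   sech (a z / 4) * sech (a z / 4) * (cosh (a z / 4)^2 * b(z)) with all three factors decaying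
   exponentially, and exponential decay gives decay of every polynomial order. *)

lemma exp_decay_imp_powr_decay:
  fixes p \<alpha> :: real
  assumes "p > 0" "\<alpha> > 0"
  shows "\<exists>C. \<forall>t\<ge>0. exp (- p * t) \<le> C * (1 + t) powr (- \<alpha>)"
proof -
  define M where "M = max 1 (\<alpha> / p)"
  show ?thesis
  proof (intro exI allI impI)
    fix t :: real
    assume t: "t \<ge> 0"
    have "1 + t \<le> M * (1 + p * t / \<alpha>)"
      using assms t by (cases "p \<le> \<alpha>") (auto simp: M_def field_simps intro: mult_right_mono)
    then have "(1 + t) powr \<alpha> \<le> (M * (1 + p * t / \<alpha>)) powr \<alpha>"
      using assms t by (intro powr_mono2) auto
    also have "\<dots> = M powr \<alpha> * (1 + p * t / \<alpha>) powr \<alpha>"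
      using assms t by (simp add: M_def powr_mult)
    also have "\<dots> \<le> M powr \<alpha> * exp (p * t / \<alpha>) powr \<alpha>"
      using assms t by (intro mult_left_mono powr_mono2) auto
    also have "\<dots> = M powr \<alpha> * exp (p * t)"
      using assms by (simp add: exp_powr_real)
    finally show "exp (- p * t) \<le> M powr \<alpha> * (1 + t) powr (- \<alpha>)"
      using t by (simp add: powr_minus exp_minus field_simps)
  qed
qed

lemma Hinf0I_exp_decay:
  assumes holo: "f holomorphic_on strip \<theta>" and "p > 0"
    and decay: "\<And>z. z \<in> strip \<theta> \<Longrightarrow> norm (f z) \<le> K * exp (- p * \<bar>Re z\<bar>)"
  shows "f \<in> Hinf0 \<theta>"
  unfolding Hinf0_def
proof (intro CollectI conjI allI impI holo)
  fix \<alpha> :: real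
  assume "\<alpha> > 0"
  then obtain C where C: "\<And>t. t \<ge> 0 \<Longrightarrow> exp (- p * t) \<le> C * (1 + t) powr (- \<alpha>)"
    using exp_decay_imp_powr_decay[OF \<open>p > 0\<close>] by blast
  show "\<exists>C. \<forall>z\<in>strip \<theta>. norm (f z) \<le> C * (1 + \<bar>Re z\<bar>) powr (- \<alpha>)"
  proof (intro exI ballI)
    fix z
    assume z: "z \<in> strip \<theta>"
    have "0 \<le> K * exp (- p * \<bar>Re z\<bar>)"
      using decay[OF z] norm_ge_zero order_trans by blast
    then have "K \<ge> 0"
      by (simp add: zero_le_mult_iff)
    have "norm (f z) \<le> K * exp (- p * \<bar>Re z\<bar>)"
      using decay[OF z] .
    also have "\<dots> \<le> K * (C * (1 + \<bar>Re z\<bar>) powr (- \<alpha>))"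
      using C[of "\<bar>Re z\<bar>"] \<open>K \<ge> 0\<close> by (intro mult_left_mono) auto
    finally show "norm (f z) \<le> (K * C) * (1 + \<bar>Re z\<bar>) powr (- \<alpha>)"
      by simp
  qed
qed

lemma has_sum_int_telescope:
  fixes G :: "int \<Rightarrow> 'a::banach"
  assumes summable: "(\<lambda>n. G n - G (n + 1)) summable_on UNIV"
    and at_bot: "(G \<longlongrightarrow> l) at_bot" and at_top: "(G \<longlongrightarrow> r) at_top"
  shows "((\<lambda>n. G n - G (n + 1)) has_sum (l - r)) UNIV"
proof -
  let ?f = "\<lambda>n. G n - G (n + 1)"
  obtain s where s: "(?f has_sum s) UNIV"
    using summable by (auto simp: summable_on_def)
  have exhausting: "filterlim (\<lambda>N::nat. {- int N..<int N}) (finite_subsets_at_top UNIV) sequentially"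
    unfolding filterlim_finite_subsets_at_top
  proof (intro allI impI)
    fix X :: "int set"
    assume "finite X \<and> X \<subseteq> UNIV"
    then obtain k where "abs ` X \<subseteq> {..<k}"
      using finite_int_iff_bounded by blast
    then have "X \<subseteq> {- int N..<int N}" if "nat k \<le> N" for N
      using that by force
    then show "\<forall>\<^sub>F N in sequentially. finite {- int N..<int N} \<and> X \<subseteq> {- int N..<int N} \<and> {- int N..<int N} \<subseteq> UNIV"
      by (intro eventually_mono[OF eventually_ge_at_top[of "nat k"]]) auto
  qed
  have "(\<lambda>N. sum ?f {- int N..<int N}) \<longlonglongrightarrow> s"
    using s unfolding has_sum_def by (rule filterlim_compose[OF _ exhausting])
  moreover have "sum ?f {- int N..<int N} = G (- int N) - G (int N)" for N
  proof (induction N)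
    case (Suc N)
    have "{- int (Suc N)..<int (Suc N)} = insert (- int (Suc N)) (insert (int N) {- int N..<int N})"
      by auto
    then show ?case
      using Suc by (simp add: algebra_simps)
  qed simp
  moreover have "filterlim (\<lambda>N::nat. - int N) at_bot sequentially"
  proof (unfold filterlim_at_bot eventually_sequentially, intro allI)
    fix Z :: int
    show "\<exists>N\<^sub>0. \<forall>N\<ge>N\<^sub>0. - int N \<le> Z"
      by (intro exI[of _ "nat (- Z)"]) auto
  qed
  then have "(\<lambda>N. G (- int N) - G (int N)) \<longlonglongrightarrow> l - r"
    by (intro tendsto_diff filterlim_compose[OF at_bot] filterlim_compose[OF at_top]
        filterlim_int_sequentially)
  ultimately have "s = l - r"
    using LIMSEQ_unique by auto
  with s show ?thesis
    by simp
qed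

lemma summable_on_exp_neg_abs_int:
  fixes c :: real
  assumes "c > 0"
  shows "(\<lambda>n::int. exp (- c * \<bar>of_int n\<bar>)) summable_on UNIV"
proof -
  have "(\<lambda>n::nat. exp (- c) ^ n) summable_on UNIV"
    using assms by (simp add: summable_on_UNIV_nonneg_real_iff summable_geometric)
  then have geometric: "(\<lambda>n::nat. exp (- c * real n)) summable_on UNIV"
    by (simp add: exp_of_nat_mult[symmetric] mult.commute)
  have "(\<lambda>n::int. exp (- c * \<bar>of_int n\<bar>)) summable_on (range int \<union> range (\<lambda>n. - int n))"
    using geometric by (intro summable_on_union; subst summable_on_reindex) (auto simp: o_def inj_on_def)
  moreover have "k \<in> range int \<union> range (\<lambda>n::nat. - int n)" for k :: int
    by (cases k rule: int_cases2) auto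
  then have "range int \<union> range (\<lambda>n::nat. - int n) = UNIV"
    by blast
  ultimately show ?thesis
    by simp
qed

lemma Re_exp_nonneg: "\<bar>Im w\<bar> \<le> pi / 2 \<Longrightarrow> 0 \<le> Re (exp w)"
  by (simp add: Re_exp cos_ge_zero)

lemma norm_one_plus_ge_max:
  fixes w :: complex
  assumes "0 \<le> Re w"
  shows "max 1 (norm w) \<le> norm (1 + w)"
proof -
  have "1 \<le> norm (1 + w)"
    using assms complex_Re_le_cmod[of "1 + w"] by simp
  moreover have "(norm w)\<^sup>2 \<le> (norm (1 + w))\<^sup>2"
    using assms unfolding cmod_power2 by (simp add: power2_eq_square algebra_simps)
  then have "norm w \<le> norm (1 + w)"
    by (rule power2_le_imp_le) simp
  ultimately show ?thesis
    by simp
qed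

definition sigmoid :: "complex \<Rightarrow> complex" where
  "sigmoid w = 1 / (1 + exp (- w))"

lemma sigmoid_denominator_ge:
  "\<bar>Im w\<bar> \<le> pi / 2 \<Longrightarrow> max 1 (exp (- Re w)) \<le> norm (1 + exp (- w))"
  using norm_one_plus_ge_max[of "exp (- w)"] Re_exp_nonneg[of "- w"] by (simp add: norm_exp_eq_Re)

lemma sigmoid_denominator_nonzero: "\<bar>Im w\<bar> \<le> pi / 2 \<Longrightarrow> 1 + exp (- w) \<noteq> 0"
  using sigmoid_denominator_ge[of w] by auto

lemma norm_sigmoid_le:
  assumes "\<bar>Im w\<bar> \<le> pi / 2"
  shows "norm (sigmoid w) \<le> exp (Re w)"
proof -
  have "norm (sigmoid w) = 1 / norm (1 + exp (- w))"
    by (simp add: sigmoid_def norm_divide)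
  also have "\<dots> \<le> 1 / exp (- Re w)"
    using sigmoid_denominator_ge[OF assms] by (intro divide_left_mono) (auto intro!: mult_pos_pos)
  finally show ?thesis
    by (simp add: exp_minus inverse_eq_divide)
qed

lemma norm_one_minus_sigmoid_le:
  assumes "\<bar>Im w\<bar> \<le> pi / 2"
  shows "norm (1 - sigmoid w) \<le> exp (- Re w)"
proof -
  have "1 - sigmoid w = exp (- w) / (1 + exp (- w))"
    using sigmoid_denominator_nonzero[OF assms] by (simp add: sigmoid_def field_simps)
  then have "norm (1 - sigmoid w) = exp (- Re w) / norm (1 + exp (- w))"
    by (simp add: norm_divide norm_exp_eq_Re)
  also have "\<dots> \<le> exp (- Re w) / 1"
    using sigmoid_denominator_ge[OF assms] by (intro divide_left_mono) auto
  finally show ?thesis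
    by simp
qed

lemma norm_sigmoid_diff_le:
  assumes "\<bar>Im w\<bar> \<le> pi / 2" "s \<ge> 0"
  shows "norm (sigmoid w - sigmoid (w - of_real s)) \<le> (1 + exp s) * exp (- \<bar>Re w\<bar>)"
proof -
  have Im_shift: "\<bar>Im (w - of_real s)\<bar> \<le> pi / 2"
    using assms by simp
  show ?thesis
  proof (cases "Re w \<ge> 0")
    case True
    have "norm (sigmoid w - sigmoid (w - of_real s))
        \<le> norm (1 - sigmoid w) + norm (1 - sigmoid (w - of_real s))"
      using norm_triangle_ineq4[of "1 - sigmoid (w - of_real s)" "1 - sigmoid w"]
      by (simp add: norm_minus_commute)
    also have "\<dots> \<le> exp (- Re w) + exp (- Re (w - of_real s))"
      using norm_one_minus_sigmoid_le[OF assms(1)] norm_one_minus_sigmoid_le[OF Im_shift]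
      by (rule add_mono)
    also have "\<dots> = (1 + exp s) * exp (- \<bar>Re w\<bar>)"
      using True by (simp add: algebra_simps exp_add[symmetric])
    finally show ?thesis .
  next
    case False
    have "norm (sigmoid w - sigmoid (w - of_real s))
        \<le> norm (sigmoid w) + norm (sigmoid (w - of_real s))"
      by (rule norm_triangle_ineq4)
    also have "\<dots> \<le> exp (Re w) + exp (Re (w - of_real s))"
      using norm_sigmoid_le[OF assms(1)] norm_sigmoid_le[OF Im_shift] by (rule add_mono)
    also have "\<dots> \<le> (1 + exp s) * exp (- \<bar>Re w\<bar>)"
      using False assms(2) by (simp add: algebra_simps exp_add[symmetric])
    finally show ?thesis .
  qed
qed

lemma norm_cosh_le: "norm (cosh w) \<le> exp \<bar>Re w\<bar>" for w :: complex
proof -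
  have "norm (cosh w) \<le> (norm (exp w) + norm (exp (- w))) / 2"
    unfolding cosh_field_def norm_divide using norm_triangle_ineq[of "exp w" "exp (- w)"] by simp
  also have "\<dots> \<le> exp \<bar>Re w\<bar>"
    by (cases "0 \<le> Re w") (simp_all add: norm_exp_eq_Re)
  finally show ?thesis .
qed

lemma norm_cosh_ge:
  fixes w :: complex
  assumes "\<bar>Im w\<bar> \<le> pi / 4"
  shows "exp \<bar>Re w\<bar> / 2 \<le> norm (cosh w)"
proof -
  have "0 \<le> Re (exp (2 * w))"
    using assms by (intro Re_exp_nonneg) simp
  then have "max 1 (exp (2 * Re w)) \<le> norm (1 + exp (2 * w))"
    using norm_one_plus_ge_max[of "exp (2 * w)"] by (simp add: norm_exp_eq_Re)
  then have "exp (- Re w) * max 1 (exp (2 * Re w)) \<le> exp (- Re w) * norm (1 + exp (2 * w))"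
    by (rule mult_left_mono) simp
  moreover have "exp (- Re w) * max 1 (exp (2 * Re w)) = exp \<bar>Re w\<bar>"
    by (simp add: max_def exp_add[symmetric])
  moreover have "exp (- Re w) * norm (1 + exp (2 * w)) = 2 * norm (cosh w)"
  proof -
    have "2 * cosh w = exp (- w) * (1 + exp (2 * w))"
      by (simp add: cosh_field_def algebra_simps exp_add[symmetric])
    from arg_cong[OF this, of norm] show ?thesis
      by (simp add: norm_mult norm_exp_eq_Re)
  qed
  ultimately show ?thesis
    by simp
qed

lemma holomorphic_on_cosh [holomorphic_intros]:
  assumes "f holomorphic_on A"
  shows "(\<lambda>z. cosh (f z :: complex)) holomorphic_on A"
proof -
  have "cosh holomorphic_on f ` A"
    unfolding cosh_conv_cos[abs_def] by (intro holomorphic_intros)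
  from holomorphic_on_compose[OF assms this] show ?thesis
    by (simp add: o_def)
qed

lemma strip_diff_of_int: "z \<in> strip \<theta> \<Longrightarrow> z - of_int n \<in> strip \<theta>"
  by (simp add: strip_def)

definition window :: "real \<Rightarrow> complex \<Rightarrow> complex" where
  "window a z = sigmoid (of_real a * z) - sigmoid (of_real a * (z - 1))"

context
  fixes a \<theta> :: real
  assumes a_pos: "a > 0" and rate: "a * \<theta> \<le> pi / 2"
begin

lemma abs_Im_scaled_le:
  assumes "z \<in> strip \<theta>"
  shows "\<bar>Im (of_real a * z)\<bar> \<le> pi / 2"
proof -
  have "a * \<bar>Im z\<bar> \<le> a * \<theta>"
    using assms a_pos by (intro mult_left_mono) (auto simp: strip_def)
  moreover have "\<bar>Im (of_real a * z)\<bar> = a * \<bar>Im z\<bar>"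
    using a_pos by (simp add: abs_mult)
  ultimately show ?thesis
    using rate by linarith
qed

lemma norm_window_le:
  assumes "z \<in> strip \<theta>"
  shows "norm (window a z) \<le> (1 + exp a) * exp (- a * \<bar>Re z\<bar>)"
proof -
  have "window a z = sigmoid (of_real a * z) - sigmoid (of_real a * z - of_real a)"
    by (simp add: window_def algebra_simps)
  then show ?thesis
    using norm_sigmoid_diff_le[OF abs_Im_scaled_le[OF assms], of a] a_pos
    by (simp add: abs_mult)
qed

lemma sigmoid_shifts_tendsto:
  assumes "z \<in> strip \<theta>"
  shows "((\<lambda>n::int. sigmoid (of_real a * (z - of_int n))) \<longlongrightarrow> 0) at_top"
    and "((\<lambda>n::int. sigmoid (of_real a * (z - of_int n))) \<longlongrightarrow> 1) at_bot"
proof -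
  have Im_shift: "\<bar>Im (of_real a * (z - of_int n))\<bar> \<le> pi / 2" for n
    by (rule abs_Im_scaled_le[OF strip_diff_of_int[OF assms]])
  have "((\<lambda>t. exp (a * (Re z - t))) \<longlongrightarrow> 0) at_top"
    using a_pos by real_asymp
  then have "((\<lambda>n::int. exp (a * (Re z - of_int n))) \<longlongrightarrow> 0) at_top"
    by (rule filterlim_compose[OF _ filterlim_real_of_int_at_top])
  then show "((\<lambda>n::int. sigmoid (of_real a * (z - of_int n))) \<longlongrightarrow> 0) at_top"
    by (rule Lim_null_comparison[rotated])
      (use norm_sigmoid_le[OF Im_shift] in simp)
  have "((\<lambda>t. exp (- a * (Re z - t))) \<longlongrightarrow> 0) at_bot"
    using a_pos by real_asymp
  then have "((\<lambda>n::int. exp (- a * (Re z - of_int n))) \<longlongrightarrow> 0) at_bot"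
    by (rule filterlim_compose[OF _ filterlim_real_of_int_at_bot])
  then have "((\<lambda>n::int. sigmoid (of_real a * (z - of_int n)) - 1) \<longlongrightarrow> 0) at_bot"
    by (rule Lim_null_comparison[rotated])
      (use norm_one_minus_sigmoid_le[OF Im_shift] in \<open>simp add: norm_minus_commute\<close>)
  then show "((\<lambda>n::int. sigmoid (of_real a * (z - of_int n))) \<longlongrightarrow> 1) at_bot"
    by (rule LIM_zero_cancel)
qed

lemma window_shifts_summable:
  assumes "z \<in> strip \<theta>"
  shows "(\<lambda>n::int. window a (z - of_int n)) summable_on UNIV"
proof (rule abs_summable_summable, rule summable_on_comparison_test)
  let ?K = "(1 + exp a) * exp (a * \<bar>Re z\<bar>)"
  show "(\<lambda>n::int. ?K * exp (- a * \<bar>of_int n\<bar>)) summable_on UNIV"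
    using summable_on_exp_neg_abs_int[OF a_pos] by (rule summable_on_cmult_right)
  fix n :: int
  have "- a * \<bar>Re z - of_int n\<bar> \<le> a * \<bar>Re z\<bar> + - a * \<bar>of_int n\<bar>"
    using a_pos mult_left_mono[of "\<bar>of_int n\<bar>" "\<bar>Re z\<bar> + \<bar>Re z - of_int n\<bar>" a]
    by (simp add: algebra_simps)
  then have shift: "exp (- a * \<bar>Re z - of_int n\<bar>) \<le> exp (a * \<bar>Re z\<bar>) * exp (- a * \<bar>of_int n\<bar>)"
    by (simp add: exp_add[symmetric])
  have "norm (window a (z - of_int n)) \<le> (1 + exp a) * exp (- a * \<bar>Re z - of_int n\<bar>)"
    using norm_window_le[OF strip_diff_of_int[OF assms], of n] by simp
  also have "\<dots> \<le> (1 + exp a) * (exp (a * \<bar>Re z\<bar>) * exp (- a * \<bar>of_int n\<bar>))"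
    by (rule mult_left_mono[OF shift]) (simp add: add_nonneg_nonneg)
  finally show "norm (window a (z - of_int n)) \<le> ?K * exp (- a * \<bar>of_int n\<bar>)"
    by (simp add: mult.assoc)
qed simp

lemma window_shifts_has_sum:
  assumes "z \<in> strip \<theta>"
  shows "((\<lambda>n::int. window a (z - of_int n)) has_sum 1) UNIV"
proof -
  define G where "G n = sigmoid (of_real a * (z - of_int n))" for n :: int
  have window_eq: "window a (z - of_int n) = G n - G (n + 1)" for n
    by (simp add: window_def G_def algebra_simps)
  have "((\<lambda>n. G n - G (n + 1)) has_sum (1 - 0)) UNIV"
    using window_shifts_summable[OF assms] sigmoid_shifts_tendsto[OF assms]
    by (intro has_sum_int_telescope) (simp_all add: window_eq G_def)
  then show ?thesis
    by (simp add: window_eq)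
qed

lemma cosh_quarter_bounds:
  assumes "z \<in> strip \<theta>"
  shows "exp (a / 4 * \<bar>Re z\<bar>) / 2 \<le> norm (cosh (of_real (a / 4) * z))"
    and "norm (cosh (of_real (a / 4) * z)) \<le> exp (a / 4 * \<bar>Re z\<bar>)"
proof -
  have "\<bar>Im (of_real (a / 4) * z)\<bar> \<le> pi / 4"
    using abs_Im_scaled_le[OF assms] by simp
  then show "exp (a / 4 * \<bar>Re z\<bar>) / 2 \<le> norm (cosh (of_real (a / 4) * z))"
    using norm_cosh_ge[of "of_real (a / 4) * z"] a_pos by (simp add: abs_mult)
  show "norm (cosh (of_real (a / 4) * z)) \<le> exp (a / 4 * \<bar>Re z\<bar>)"
    using norm_cosh_le[of "of_real (a / 4) * z"] a_pos by (simp add: abs_mult)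
qed

lemma cosh_quarter_nonzero: "z \<in> strip \<theta> \<Longrightarrow> cosh (of_real (a / 4) * z) \<noteq> 0"
  using cosh_quarter_bounds(1)[of z] by (auto simp: order.strict_trans2)

lemma sech_quarter_in_Hinf0: "(\<lambda>z. inverse (cosh (of_real (a / 4) * z))) \<in> Hinf0 \<theta>"
proof (rule Hinf0I_exp_decay)
  show "(\<lambda>z. inverse (cosh (of_real (a / 4) * z))) holomorphic_on strip \<theta>"
    using cosh_quarter_nonzero by (intro holomorphic_intros) auto
  fix z
  assume z: "z \<in> strip \<theta>"
  have "norm (inverse (cosh (of_real (a / 4) * z))) \<le> inverse (exp (a / 4 * \<bar>Re z\<bar>) / 2)"
    unfolding norm_inverse by (rule le_imp_inverse_le[OF cosh_quarter_bounds(1)[OF z]]) simp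
  also have "\<dots> = 2 * exp (- (a / 4) * \<bar>Re z\<bar>)"
    by (simp add: exp_minus field_simps)
  finally show "norm (inverse (cosh (of_real (a / 4) * z))) \<le> 2 * exp (- (a / 4) * \<bar>Re z\<bar>)" .
qed (use a_pos in simp)

lemma cosh_quarter_sq_window_in_Hinf0:
  "(\<lambda>z. cosh (of_real (a / 4) * z) ^ 2 * window a z) \<in> Hinf0 \<theta>"
proof (rule Hinf0I_exp_decay)
  have "1 + exp (- (of_real a * w)) \<noteq> 0" if "w \<in> strip \<theta>" for w
    by (rule sigmoid_denominator_nonzero[OF abs_Im_scaled_le[OF that]])
  moreover have "z - 1 \<in> strip \<theta>" if "z \<in> strip \<theta>" for z
    using that by (simp add: strip_def)
  ultimately show "(\<lambda>z. cosh (of_real (a / 4) * z) ^ 2 * window a z) holomorphic_on strip \<theta>"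
    unfolding window_def sigmoid_def by (intro holomorphic_intros) auto
  fix z
  assume z: "z \<in> strip \<theta>"
  have "norm (cosh (of_real (a / 4) * z) ^ 2 * window a z)
      \<le> exp (a / 4 * \<bar>Re z\<bar>) ^ 2 * ((1 + exp a) * exp (- a * \<bar>Re z\<bar>))"
    unfolding norm_mult norm_power
    using cosh_quarter_bounds(2)[OF z] norm_window_le[OF z] by (intro mult_mono power_mono) auto
  also have "\<dots> = (1 + exp a) * (exp (a / 4 * \<bar>Re z\<bar>) ^ 2 * exp (- a * \<bar>Re z\<bar>))"
    by (simp only: ac_simps)
  also have "exp (a / 4 * \<bar>Re z\<bar>) ^ 2 * exp (- a * \<bar>Re z\<bar>) = exp (- (a / 2) * \<bar>Re z\<bar>)"
    by (simp add: power2_eq_square exp_add[symmetric])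
  finally show "norm (cosh (of_real (a / 4) * z) ^ 2 * window a z) \<le> (1 + exp a) * exp (- (a / 2) * \<bar>Re z\<bar>)" .
qed (use a_pos in simp)

end

theorem lemma8p6:
  fixes \<theta> :: real
  assumes "\<theta> > 0"
  shows "\<exists>\<psi> \<psi>\<^sub>1 \<psi>\<^sub>2. \<psi> \<in> Hinf0 \<theta> \<and> \<psi>\<^sub>1 \<in> Hinf0 \<theta> \<and> \<psi>\<^sub>2 \<in> Hinf0 \<theta> \<and>
     (\<forall>z\<in>strip \<theta>.
        ((\<lambda>n::int. \<psi>\<^sub>1 (z - of_int n) * \<psi>\<^sub>2 (z - of_int n) * \<psi> (z - of_int n)) has_sum 1) UNIV)"
proof -
  define a where "a = pi / (2 * \<theta>)"
  have a: "a > 0" "a * \<theta> \<le> pi / 2"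
    using assms by (simp_all add: a_def)
  define sech where "sech (z::complex) = inverse (cosh (of_real (a / 4) * z))" for z
  define \<psi> where "\<psi> (z::complex) = cosh (of_real (a / 4) * z) ^ 2 * window a z" for z
  have factorization: "sech w * sech w * \<psi> w = window a w" if "w \<in> strip \<theta>" for w
    using cosh_quarter_nonzero[OF a that] by (simp add: sech_def \<psi>_def field_simps power2_eq_square)
  have "((\<lambda>n::int. sech (z - of_int n) * sech (z - of_int n) * \<psi> (z - of_int n)) has_sum 1) UNIV"
    if "z \<in> strip \<theta>" for z
    using window_shifts_has_sum[OF a that] by (simp add: factorization strip_diff_of_int[OF that])
  moreover have "sech \<in> Hinf0 \<theta>" "\<psi> \<in> Hinf0 \<theta>"
    using sech_quarter_in_Hinf0[OF a] cosh_quarter_sq_window_in_Hinf0[OF a]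
    by (simp_all add: sech_def[abs_def] \<psi>_def[abs_def])
  ultimately show ?thesis
    by blast
qed

end
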